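(* Let $s$ be a nonzero integer such that $s^2+2$ is squarefree. Then $$\epsilon=s^2+1+|s|\sqrt{s^2+2}$$ is the fundamental unit of the ring of integers of $\mathbb{Q}(\sqrt{s^2+2})$. If moreover $|s|\ge 3$ and $3s^2-4s+4$ is a perfect square, and $r_1,r_3$ are the roots of $F_s(t)= t^4 + (4s^3 - 4s^2 + 8s - 4)t^3 + (-6s^2 - 6)t^2 + 4t + 1$ characterized by $r_1=-4s^3+4s^2-8s+4-\tfrac32 s^{-1}-\tfrac32 s^{-2}+\theta_1 s^{-4}$ with $1\le\theta_1\le2$ and $r_3=\tfrac12 s^{-1}+\tfrac12 s^{-2}-\theta_3 s^{-4}$ with $0\le\theta_3\le1$, then $\epsilon=-r_1r_3$. *)

theory Defs
  imports "HOL-Computational_Algebra.Computational_Algebra"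
begin

text \<open>The real quadratic field Q(sqrt d), realised inside the reals via the
  embedding sending sqrt d to the positive real square root.\<close>
definition quad_field :: "int \<Rightarrow> real set" where
  "quad_field d = {of_rat a + of_rat b * sqrt (of_int d) | a b. True}"

definition quad_ring_of_integers :: "int \<Rightarrow> real set" where
  "quad_ring_of_integers d = {x \<in> quad_field d. algebraic_int x}"

definition quad_units :: "int \<Rightarrow> real set" where
  "quad_units d = {x \<in> quad_ring_of_integers d. x \<noteq> 0 \<and> inverse x \<in> quad_ring_of_integers d}"

definition fundamental_unit :: "int \<Rightarrow> real \<Rightarrow> bool" where
  "fundamental_unit d eps \<longleftrightarrow> eps \<in> quad_units d \<and> eps > 1 \<and>
     (\<forall>u \<in> quad_units d. \<exists>n::int. u = eps powi n \<or> u = - (eps powi n))"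

definition F_poly :: "int \<Rightarrow> real \<Rightarrow> real" where
  "F_poly s t = t^4 + (4*s^3 - 4*s^2 + 8*s - 4) * t^3 + (-6*s^2 - 6) * t^2 + 4*t + 1"

end

theory Submission
  imports Defs
begin

text \<open>Let \<open>d = s\<^sup>2 + 2\<close>. Since \<open>d\<close> is squarefree and \<open>d \<equiv> 2, 3 (mod 4)\<close>, Gauss's lemma
  shows that every algebraic integer of \<open>\<rat>(\<surd>d)\<close> lies in \<open>\<int>[\<surd>d]\<close>, so the units are
  the numbers \<open>X + Y\<surd>d\<close> with \<open>X\<^sup>2 - dY\<^sup>2 = \<plusminus>1\<close>. A unit \<open>> 1\<close> has \<open>X, Y > 0\<close>, and
  \<open>0 < Y < |s|\<close> is impossible because \<open>X\<^sup>2\<close> would lie strictly between \<open>(|s|Y)\<^sup>2\<close> and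
  \<open>(|s|Y + 1)\<^sup>2\<close>; hence \<open>\<epsilon> = s\<^sup>2 + 1 + |s|\<surd>d\<close> is the least unit \<open>> 1\<close>, i.e. fundamental.

  Over \<open>\<rat>(\<surd>d)\<close> the quartic factors as \<open>F\<^sub>s(t) = (t\<^sup>2 + At - \<epsilon>)(t\<^sup>2 + Bt - \<epsilon>\<inverse>)\<close>
  with \<open>|B| \<le> 1\<close> and \<open>Bs \<le> -3/5\<close>. The estimates \<open>|r\<^sub>1| \<ge> 2\<close> and \<open>0 \<le> s r\<^sub>3 \<le> 1\<close> show that
  neither \<open>r\<^sub>1\<close> nor \<open>r\<^sub>3\<close> is a root of the second factor, so they are the two roots of the
  first one and \<open>r\<^sub>1 r\<^sub>3 = -\<epsilon>\<close>.\<close>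

section \<open>The ring of integers of \<open>\<rat>(\<surd>d)\<close>\<close>

lemma sqrt_squarefree_not_rat:
  fixes d :: int
  assumes "squarefree d" and "d \<ge> 2"
  shows "sqrt (real_of_int d) \<notin> \<rat>"
proof
  assume "sqrt (real_of_int d) \<in> \<rat>"
  moreover have "algebraic_int (sqrt (real_of_int d))"
    by (intro algebraic_int_sqrt) simp
  ultimately have "sqrt (real_of_int d) \<in> \<int>"
    using rational_algebraic_int_is_int by blast
  then obtain k where k: "sqrt (real_of_int d) = of_int k"
    by (auto elim: Ints_cases)
  have "real_of_int d = (sqrt (real_of_int d))^2"
    using assms(2) by simp
  also have "\<dots> = of_int (k^2)"
    using k by simp
  finally have "d = k^2"
    by linarith
  with assms(1) have "is_unit k"
    unfolding squarefree_def by auto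
  with \<open>d = k^2\<close> assms(2) show False
    by (auto simp: abs_if split: if_splits)
qed

lemma rat_coords_eq_0:
  fixes p q w :: real
  assumes "w \<notin> \<rat>" and "p \<in> \<rat>" and "q \<in> \<rat>" and "p + q * w = 0"
  shows "p = 0 \<and> q = 0"
proof (cases "q = 0")
  case False
  hence "w = - p / q"
    using assms(4) by (simp add: field_simps)
  with assms(1-3) show ?thesis
    by simp
qed (use assms(4) in simp)

lemma map_poly_of_rat_add:
  "map_poly (of_rat :: rat \<Rightarrow> real) (p + q) = map_poly of_rat p + map_poly of_rat q"
  by (rule poly_eqI) (simp add: coeff_map_poly of_rat_add)

lemma map_poly_of_rat_mult:
  "map_poly (of_rat :: rat \<Rightarrow> real) (p * q) = map_poly of_rat p * map_poly of_rat q"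
  by (rule poly_eqI) (simp add: coeff_map_poly coeff_mult of_rat_sum of_rat_mult)

lemma map_poly_of_int_mult:
  "map_poly (of_int :: int \<Rightarrow> rat) (p * q) = map_poly of_int p * map_poly of_int q"
  by (rule poly_eqI) (simp add: coeff_map_poly coeff_mult)

lemma rat_poly_common_denominator:
  fixes p :: "rat poly"
  obtains D :: int where "D > 0" and "\<And>i. of_int D * coeff p i \<in> \<int>"
proof -
  have "\<exists>D::int. D > 0 \<and> (\<forall>i. of_int D * coeff p i \<in> \<int>)"
  proof (induction p)
    case (pCons c p)
    then obtain D where D: "D > 0" "\<forall>i. of_int D * coeff p i \<in> \<int>"
      by blast
    obtain a b where ab: "quotient_of c = (a, b)"
      by force
    have "b > 0" and c: "c = of_int a / of_int b"
      using quotient_of_denom_pos[OF ab] quotient_of_div[OF ab] by simp_all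
    have "of_int (D * b) * coeff (pCons c p) i \<in> \<int>" for i
    proof (cases i)
      case 0
      with \<open>b > 0\<close> show ?thesis
        by (simp add: c)
    next
      case (Suc j)
      have "of_int b * (of_int D * coeff p j) \<in> \<int>"
        using D(2) by simp
      with Suc show ?thesis
        by (simp add: mult_ac)
    qed
    with D(1) \<open>b > 0\<close> show ?case
      by (intro exI[of _ "D * b"]) simp
  qed (auto intro: exI[of _ 1])
  with that show ?thesis
    by blast
qed

lemma of_int_floor_Ints: "(x :: rat) \<in> \<int> \<Longrightarrow> of_int \<lfloor>x\<rfloor> = x"
  by (auto elim: Ints_cases)

text \<open>Gauss's lemma via contents: after clearing denominators, the contents of the two scaled
  factors multiply to the product of the two denominators, while each content divides its own
  denominator.\<close>
lemma monic_factor_of_monic_int_poly: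
  fixes P :: "int poly" and m R :: "rat poly"
  assumes "lead_coeff P = 1" and "lead_coeff m = 1" and PmR: "map_poly of_int P = m * R"
  shows "coeff m i \<in> \<int>"
proof -
  obtain D where D: "D > 0" "\<And>i. of_int D * coeff m i \<in> \<int>"
    by (rule rat_poly_common_denominator[of m]) blast
  obtain E where E: "E > 0" "\<And>i. of_int E * coeff R i \<in> \<int>"
    by (rule rat_poly_common_denominator[of R]) blast
  define M :: "int poly" where "M = map_poly (\<lambda>c. \<lfloor>of_int D * c\<rfloor>) m"
  define N :: "int poly" where "N = map_poly (\<lambda>c. \<lfloor>of_int E * c\<rfloor>) R"
  have cM: "coeff M i = \<lfloor>of_int D * coeff m i\<rfloor>" for i
    unfolding M_def by (simp add: coeff_map_poly)
  have cN: "coeff N i = \<lfloor>of_int E * coeff R i\<rfloor>" for i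
    unfolding N_def by (simp add: coeff_map_poly)
  have M: "map_poly of_int M = smult (of_int D) m"
    by (rule poly_eqI) (simp add: coeff_map_poly cM of_int_floor_Ints D(2))
  have N: "map_poly of_int N = smult (of_int E) R"
    by (rule poly_eqI) (simp add: coeff_map_poly cN of_int_floor_Ints E(2))
  have "lead_coeff (map_poly (of_int :: int \<Rightarrow> rat) P) = 1"
    using assms(1) by (simp add: degree_map_poly coeff_map_poly)
  hence lead_R: "lead_coeff R = 1"
    using assms(2) by (simp add: PmR lead_coeff_mult)
  have "map_poly (of_int :: int \<Rightarrow> rat) (M * N) = smult (of_int (D * E)) (m * R)"
    by (simp add: map_poly_of_int_mult M N mult_ac)
  also have "\<dots> = map_poly of_int (smult (D * E) P)"
    by (rule poly_eqI) (simp add: coeff_map_poly PmR[symmetric])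
  finally have MN: "M * N = smult (D * E) P"
    by (metis (no_types, lifting) coeff_map_poly of_int_0 of_int_eq_iff poly_eqI)
  have "content P = 1"
    using content_dvd_coeff[of P "degree P"] assms(1) normalize_content[of P]
    by simp
  hence prod: "content M * content N = D * E"
    using arg_cong[OF MN, of content] D(1) E(1) by (simp add: content_mult)
  have "content M dvd D"
    using content_dvd_coeff[of M "degree m"] assms(2) by (simp add: cM)
  hence "content M \<le> D"
    using D(1) by (simp add: zdvd_imp_le)
  have "content N dvd E"
    using content_dvd_coeff[of N "degree R"] lead_R by (simp add: cN)
  hence "content N \<le> E"
    using E(1) by (simp add: zdvd_imp_le)
  have "content M \<ge> 0" "content N \<ge> 0"
    by (metis abs_ge_zero normalize_content normalize_int_def)+
  have "content M = D"
  proof (rule ccontr)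
    assume "content M \<noteq> D"
    with \<open>content M \<le> D\<close> have "content M < D"
      by simp
    have "content M * content N \<le> content M * E"
      using \<open>content N \<le> E\<close> \<open>content M \<ge> 0\<close> by (rule mult_left_mono)
    also have "\<dots> < D * E"
      using \<open>content M < D\<close> E(1) by (rule mult_strict_right_mono)
    finally show False
      using prod by simp
  qed
  then obtain k where "\<lfloor>of_int D * coeff m i\<rfloor> = D * k"
    using content_dvd_coeff[of M i] by (auto simp: cM dvd_def)
  hence "of_int D * coeff m i = of_int (D * k)"
    using of_int_floor_Ints[OF D(2)[of i]] by metis
  hence "coeff m i = of_int k"
    using D(1) by auto
  thus ?thesis
    by simp
qed

lemma rat_poly_linear_root_irrational_eq_0:
  fixes r :: "rat poly" and a b :: rat and w :: real
  assumes "w \<notin> \<rat>" and "b \<noteq> 0" and "degree r \<le> 1"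
    and root: "poly (map_poly of_rat r) (of_rat a + of_rat b * w) = 0"
  shows "r = 0"
proof -
  have r: "r = [:coeff r 0, coeff r 1:]"
    using assms(3) by (intro poly_eqI) (auto simp: coeff_pCons coeff_eq_0 split: nat.splits)
  have "of_rat (coeff r 0) + (of_rat a + of_rat b * w) * of_rat (coeff r 1) = 0"
    using root by (subst (asm) r) (simp add: map_poly_pCons split: if_splits)
  hence "of_rat (coeff r 0 + coeff r 1 * a) + of_rat (coeff r 1 * b) * w = 0"
    by (simp add: of_rat_add of_rat_mult algebra_simps)
  hence "of_rat (coeff r 0 + coeff r 1 * a) = (0 :: real) \<and> of_rat (coeff r 1 * b) = (0 :: real)"
    using rat_coords_eq_0[OF assms(1) Rats_of_rat Rats_of_rat] by blast
  hence "coeff r 0 + coeff r 1 * a = 0 \<and> coeff r 1 * b = 0"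
    by simp
  with assms(2) have "coeff r 1 = 0" and "coeff r 0 = 0"
    by auto
  with r show ?thesis
    by simp
qed

text \<open>\<open>x = a + b\<surd>d\<close> is a root of \<open>m = X\<^sup>2 - 2aX + (a\<^sup>2 - db\<^sup>2)\<close>; the remainder of \<open>P\<close>
  modulo \<open>m\<close> is a rational polynomial of degree at most one vanishing at the irrational \<open>x\<close>.\<close>
lemma quadratic_min_poly_dvd:
  fixes d :: int and a b :: rat and P :: "int poly"
  assumes irr: "sqrt (real_of_int d) \<notin> \<rat>" and "d \<ge> 0" and "b \<noteq> 0"
    and root: "poly (map_poly of_int P) (of_rat a + of_rat b * sqrt (real_of_int d)) = 0"
  shows "[:a^2 - of_int d * b^2, -2 * a, 1:] dvd map_poly of_int P"
proof -
  define x where "x = of_rat a + of_rat b * sqrt (real_of_int d)"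
  define PQ :: "rat poly" where "PQ = map_poly of_int P"
  define m :: "rat poly" where "m = [:a^2 - of_int d * b^2, -2 * a, 1:]"
  have "poly (map_poly of_rat m) x = x^2 - 2 * of_rat a * x + (of_rat a)^2 - of_int d * (of_rat b)^2"
    by (simp add: m_def map_poly_pCons of_rat_diff of_rat_mult of_rat_power of_rat_minus
        algebra_simps power2_eq_square)
  also have "\<dots> = 0"
    using \<open>d \<ge> 0\<close> by (simp add: x_def algebra_simps power2_eq_square)
  finally have m_root: "poly (map_poly of_rat m) x = 0" .
  have "map_poly (of_rat :: rat \<Rightarrow> real) PQ = map_poly of_int P"
    by (simp add: PQ_def map_poly_map_poly o_def)
  hence "poly (map_poly of_rat PQ) x = 0"
    using root by (simp add: x_def)
  moreover have "PQ = m * (PQ div m) + PQ mod m"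
    by simp
  ultimately have "poly (map_poly of_rat (PQ mod m)) x = 0"
    by (metis m_root map_poly_of_rat_add map_poly_of_rat_mult poly_add poly_mult mult_zero_left
        add_0)
  moreover have "degree (PQ mod m) \<le> 1"
    using degree_mod_less[of m PQ] by (cases "PQ mod m = 0") (auto simp: m_def)
  ultimately have "PQ mod m = 0"
    using rat_poly_linear_root_irrational_eq_0[OF irr \<open>b \<noteq> 0\<close>] unfolding x_def by blast
  thus ?thesis
    unfolding m_def PQ_def by (simp add: mod_eq_0_iff_dvd)
qed

lemma algebraic_int_quadratic_trace_norm:
  fixes d :: int and a b :: rat
  assumes irr: "sqrt (real_of_int d) \<notin> \<rat>" and "d \<ge> 0"
    and alg: "algebraic_int (of_rat a + of_rat b * sqrt (real_of_int d))"
  shows "2 * a \<in> \<int>" and "a^2 - of_int d * b^2 \<in> \<int>"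
proof -
  have "2 * a \<in> \<int> \<and> a^2 - of_int d * b^2 \<in> \<int>"
  proof (cases "b = 0")
    case True
    with alg have "of_rat a \<in> (\<int> :: real set)"
      using rational_algebraic_int_is_int[OF _ Rats_of_rat] by simp
    then obtain k where "(of_rat a :: real) = of_int k"
      by (auto elim: Ints_cases)
    hence "a = of_int k"
      by (metis of_rat_eq_iff of_rat_of_int_eq)
    with True show ?thesis
      by simp
  next
    case False
    obtain P where P: "poly (map_poly of_int P) (of_rat a + of_rat b * sqrt (real_of_int d)) = 0"
      and "lead_coeff P = 1"
      using alg algebraic_int_altdef_ipoly by blast
    from quadratic_min_poly_dvd[OF irr \<open>d \<ge> 0\<close> False P] obtain R
      where "map_poly of_int P = [:a^2 - of_int d * b^2, -2 * a, 1:] * R"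
      by (elim dvdE)
    hence "coeff [:a^2 - of_int d * b^2, -2 * a, 1:] i \<in> \<int>" for i
      using monic_factor_of_monic_int_poly[OF \<open>lead_coeff P = 1\<close>] by simp
    from this[of 0] this[of 1] show ?thesis
      by simp
  qed
  thus "2 * a \<in> \<int>" and "a^2 - of_int d * b^2 \<in> \<int>"
    by simp_all
qed

lemma int_square_mod_4: "(x^2) mod 4 = (if even x then 0 else 1 :: int)"
proof (cases "even x")
  case True
  then obtain u where "x = 2 * u"
    by (auto elim: evenE)
  hence "x^2 = 4 * u^2"
    by (simp add: power_mult_distrib)
  with True show ?thesis
    by simp
next
  case False
  then obtain u where "x = 2 * u + 1"
    by (auto elim: oddE)
  hence "x^2 = 4 * (u^2 + u) + 1"
    by (simp add: algebra_simps power2_eq_square)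
  moreover have "(4 * z + 1) mod 4 = (1 :: int)" for z
    by presburger
  ultimately have "x^2 mod 4 = 1"
    by metis
  with False show ?thesis
    by simp
qed

lemma even_of_4_dvd_norm:
  fixes T p d :: int
  assumes "4 dvd T^2 - d * p^2" and "d mod 4 = 2 \<or> d mod 4 = 3"
  shows "even T \<and> even p"
proof -
  have "(T^2 - d * p^2) mod 4 = 0"
    using assms(1) by simp
  hence "(T^2 mod 4 - ((d mod 4) * (p^2 mod 4)) mod 4) mod 4 = 0"
    by (metis mod_diff_eq mod_mult_eq)
  with assms(2) show ?thesis
    unfolding int_square_mod_4 by (cases "even T"; cases "even p") auto
qed

text \<open>Squarefreeness of \<open>d\<close> turns \<open>d (2b)\<^sup>2 \<in> \<int>\<close> into \<open>2b \<in> \<int>\<close>; then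
  \<open>(2a)\<^sup>2 - d (2b)\<^sup>2 \<equiv> 0 (mod 4)\<close> with \<open>d \<equiv> 2, 3 (mod 4)\<close> forces \<open>2a\<close>, \<open>2b\<close> even.\<close>
lemma half_int_coords_are_int:
  fixes d :: int and a b :: rat
  assumes sf: "squarefree d" and d4: "d mod 4 = 2 \<or> d mod 4 = 3"
    and "2 * a \<in> \<int>" and "a^2 - of_int d * b^2 \<in> \<int>"
  shows "a \<in> \<int> \<and> b \<in> \<int>"
proof -
  obtain T where T: "2 * a = of_int T"
    using assms(3) by (auto elim: Ints_cases)
  obtain K where K: "a^2 - of_int d * b^2 = of_int K"
    using assms(4) by (auto elim: Ints_cases)
  obtain p q where pq: "quotient_of (2 * b) = (p, q)"
    by force
  have "q > 0" and "coprime p q" and bq: "2 * b = of_int p / of_int q"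
    using quotient_of_denom_pos[OF pq] quotient_of_coprime[OF pq] quotient_of_div[OF pq]
    by simp_all
  have "of_int d * (2 * b)^2 = (2 * a)^2 - 4 * (a^2 - of_int d * b^2)"
    by (simp add: algebra_simps power2_eq_square)
  hence "of_int d * (of_int p / of_int q)^2 = (of_int (T^2 - 4 * K) :: rat)"
    by (simp add: T K bq)
  hence "of_int d * of_int p ^ 2 = (of_int ((T^2 - 4 * K) * q^2) :: rat)"
    using \<open>q > 0\<close> by (simp add: field_simps)
  hence eq: "d * p^2 = (T^2 - 4 * K) * q^2"
    by (metis of_int_eq_iff of_int_mult of_int_power)
  have "coprime (q^2) (p^2)"
    using \<open>coprime p q\<close> by (simp add: coprime_commute)
  with eq have "q^2 dvd d"
    by (metis coprime_dvd_mult_left_iff dvd_triv_right)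
  hence "q = 1"
    using sf \<open>q > 0\<close> unfolding squarefree_def by fastforce
  hence "4 dvd T^2 - d * p^2"
    using eq by simp
  from even_of_4_dvd_norm[OF this d4] obtain u v where "T = 2 * u" "p = 2 * v"
    by (auto elim!: evenE)
  with T bq \<open>q = 1\<close> have "a = of_int u" "b = of_int v"
    by simp_all
  thus ?thesis
    by simp
qed

lemma quad_ring_of_integersE:
  fixes d :: int
  assumes "squarefree d" and "d mod 4 = 2 \<or> d mod 4 = 3" and "d \<ge> 2"
    and "x \<in> quad_ring_of_integers d"
  obtains X Y :: int where "x = of_int X + of_int Y * sqrt (of_int d)"
proof -
  from assms(4) obtain a b where ab: "x = of_rat a + of_rat b * sqrt (of_int d)"
    and "algebraic_int x"
    unfolding quad_ring_of_integers_def quad_field_def by blast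
  with assms(1,3) have "2 * a \<in> \<int>" "a^2 - of_int d * b^2 \<in> \<int>"
    using algebraic_int_quadratic_trace_norm[OF sqrt_squarefree_not_rat] by auto
  with assms(1,2) have "a \<in> \<int>" "b \<in> \<int>"
    using half_int_coords_are_int by blast+
  then obtain X Y where "a = of_int X" "b = of_int Y"
    by (auto elim!: Ints_cases)
  with ab that show ?thesis
    by simp
qed

section \<open>Units and the norm equation\<close>

definition pell_unit :: "int \<Rightarrow> real \<Rightarrow> bool" where
  "pell_unit d v \<longleftrightarrow>
     (\<exists>X Y :: int. v = of_int X + of_int Y * sqrt (of_int d) \<and> \<bar>X^2 - d * Y^2\<bar> = 1)"

lemma quad_mult:
  fixes d :: int
  assumes "d \<ge> 0"
  shows "(of_int X1 + of_int Y1 * sqrt (of_int d)) * (of_int X2 + of_int Y2 * sqrt (of_int d)) =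
    of_int (X1 * X2 + d * Y1 * Y2) + of_int (X1 * Y2 + X2 * Y1) * sqrt (of_int d)"
proof -
  define w where "w = sqrt (real_of_int d)"
  have "(of_int X1 + of_int Y1 * w) * (of_int X2 + of_int Y2 * w) =
      of_int X1 * of_int X2 + of_int Y1 * of_int Y2 * (w * w)
        + (of_int X1 * of_int Y2 + of_int X2 * of_int Y1) * w"
    by (simp add: algebra_simps)
  also have "w * w = of_int d"
    using assms by (simp add: w_def)
  finally show ?thesis
    by (simp add: w_def)
qed

lemma quad_mult_conj:
  fixes d :: int
  assumes "d \<ge> 0"
  shows "(of_int X + of_int Y * sqrt (of_int d)) * (of_int X + of_int (- Y) * sqrt (of_int d)) =
    of_int (X^2 - d * Y^2)"
  using quad_mult[OF assms, of X Y X "- Y"] by (simp add: power2_eq_square mult_ac)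

lemma quad_norm_mult:
  fixes d X1 Y1 X2 Y2 :: int
  shows "(X1 * X2 + d * Y1 * Y2)^2 - d * (X1 * Y2 + X2 * Y1)^2 = (X1^2 - d * Y1^2) * (X2^2 - d * Y2^2)"
  by (simp add: algebra_simps power2_eq_square)

lemma pell_unitE:
  assumes "pell_unit d v"
  obtains X Y where "v = of_int X + of_int Y * sqrt (of_int d)" and "\<bar>X^2 - d * Y^2\<bar> = 1"
  using assms unfolding pell_unit_def by blast

lemma pell_unit_one: "pell_unit d 1"
  unfolding pell_unit_def by (intro exI[of _ 1] exI[of _ 0]) simp

lemma pell_unit_uminus:
  assumes "pell_unit d v"
  shows "pell_unit d (- v)"
proof -
  obtain X Y where "v = of_int X + of_int Y * sqrt (of_int d)" and "\<bar>X^2 - d * Y^2\<bar> = 1"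
    using assms by (rule pell_unitE)
  thus ?thesis
    unfolding pell_unit_def by (intro exI[of _ "- X"] exI[of _ "- Y"]) simp
qed

lemma pell_unit_abs: "pell_unit d v \<Longrightarrow> pell_unit d \<bar>v\<bar>"
  by (cases "v \<ge> 0") (auto intro: pell_unit_uminus)

lemma pell_unit_mult:
  assumes "d \<ge> 0" and "pell_unit d u" and "pell_unit d v"
  shows "pell_unit d (u * v)"
proof -
  obtain X1 Y1 where u: "u = of_int X1 + of_int Y1 * sqrt (of_int d)" "\<bar>X1^2 - d * Y1^2\<bar> = 1"
    using assms(2) by (rule pell_unitE)
  obtain X2 Y2 where v: "v = of_int X2 + of_int Y2 * sqrt (of_int d)" "\<bar>X2^2 - d * Y2^2\<bar> = 1"
    using assms(3) by (rule pell_unitE)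
  show ?thesis
    unfolding pell_unit_def
    by (intro exI[of _ "X1 * X2 + d * Y1 * Y2"] exI[of _ "X1 * Y2 + X2 * Y1"])
       (simp add: u v quad_mult[OF assms(1)] quad_norm_mult abs_mult)
qed

lemma pell_unit_inverse:
  assumes "d \<ge> 0" and "pell_unit d v"
  shows "pell_unit d (inverse v)"
proof -
  obtain X Y where v: "v = of_int X + of_int Y * sqrt (of_int d)" and N: "\<bar>X^2 - d * Y^2\<bar> = 1"
    using assms(2) by (rule pell_unitE)
  define N where "N = X^2 - d * Y^2"
  have NN: "N * N = 1"
    using N unfolding N_def by (metis abs_mult_self_eq mult_1)
  have "v * (of_int X + of_int (- Y) * sqrt (of_int d)) = of_int N"
    unfolding v N_def by (rule quad_mult_conj[OF assms(1)])
  hence "v * (of_int N * (of_int X + of_int (- Y) * sqrt (of_int d))) = 1"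
    by (metis NN mult.left_commute of_int_1 of_int_mult)
  hence "inverse v = of_int N * (of_int X + of_int (- Y) * sqrt (of_int d))"
    by (rule inverse_unique)
  hence "inverse v = of_int (N * X) + of_int (- (N * Y)) * sqrt (of_int d)"
    by (simp add: algebra_simps)
  moreover have "(N * X)^2 - d * (- (N * Y))^2 = N * N * N"
    by (simp add: N_def power2_eq_square algebra_simps)
  ultimately show ?thesis
    unfolding pell_unit_def using N NN by (metis N_def mult_1)
qed

lemma pell_unit_powi:
  assumes "d \<ge> 0" and "pell_unit d v"
  shows "pell_unit d (v powi n)"
proof -
  have "pell_unit d (w ^ k)" if "pell_unit d w" for w k
    by (induction k) (auto intro: pell_unit_mult pell_unit_one assms(1) that)
  with assms show ?thesis
    unfolding power_int_def by (auto intro: pell_unit_inverse)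
qed

lemma pell_unit_nonzero:
  assumes "d \<ge> 0" and "pell_unit d v"
  shows "v \<noteq> 0"
proof
  assume "v = 0"
  obtain X Y where v: "v = of_int X + of_int Y * sqrt (of_int d)" and "\<bar>X^2 - d * Y^2\<bar> = 1"
    using assms(2) by (rule pell_unitE)
  have "of_int (X^2 - d * Y^2) = (0 :: real)"
    using quad_mult_conj[OF assms(1), of X Y] \<open>v = 0\<close> unfolding v by (metis mult_zero_left)
  with \<open>\<bar>X^2 - d * Y^2\<bar> = 1\<close> show False
    by (simp only: of_int_eq_0_iff)
qed

lemma quad_units_pell_unit:
  fixes d :: int
  assumes "squarefree d" and "d mod 4 = 2 \<or> d mod 4 = 3" and "d \<ge> 2"
    and "u \<in> quad_units d"
  shows "pell_unit d u"
proof -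
  define w where "w = sqrt (real_of_int d)"
  have "u \<noteq> 0" and "u \<in> quad_ring_of_integers d" and "inverse u \<in> quad_ring_of_integers d"
    using assms(4) unfolding quad_units_def by auto
  then obtain X1 Y1 X2 Y2 where 1: "u = of_int X1 + of_int Y1 * w"
    and 2: "inverse u = of_int X2 + of_int Y2 * w"
    using quad_ring_of_integersE[OF assms(1-3)] unfolding w_def by metis
  have "1 = u * inverse u"
    using \<open>u \<noteq> 0\<close> by simp
  also have "\<dots> = of_int (X1 * X2 + d * Y1 * Y2) + of_int (X1 * Y2 + X2 * Y1) * w"
    unfolding 2 unfolding 1 w_def by (rule quad_mult) (use assms(3) in simp)
  finally have "of_int (X1 * X2 + d * Y1 * Y2 - 1) + of_int (X1 * Y2 + X2 * Y1) * w = 0"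
    by simp
  hence "real_of_int (X1 * X2 + d * Y1 * Y2 - 1) = 0 \<and> real_of_int (X1 * Y2 + X2 * Y1) = 0"
    using rat_coords_eq_0[OF sqrt_squarefree_not_rat[OF assms(1,3), folded w_def] Rats_of_int
        Rats_of_int] by blast
  hence "X1 * X2 + d * Y1 * Y2 - 1 = 0 \<and> X1 * Y2 + X2 * Y1 = 0"
    by (simp only: of_int_eq_0_iff)
  hence "(X1^2 - d * Y1^2) * (X2^2 - d * Y2^2) = 1"
    by (simp flip: quad_norm_mult)
  hence "\<bar>X1^2 - d * Y1^2\<bar> = 1"
    using zmult_eq_1_iff by fastforce
  with 1 show ?thesis
    unfolding pell_unit_def w_def by blast
qed

lemma quad_int_in_ring_of_integers:
  fixes d X Y :: int
  assumes "d \<ge> 0"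
  shows "of_int X + of_int Y * sqrt (of_int d) \<in> quad_ring_of_integers d"
proof -
  define x where "x = of_int X + of_int Y * sqrt (real_of_int d)"
  have "x \<in> quad_field d"
    unfolding quad_field_def x_def by (intro CollectI exI[of _ "of_int X"] exI[of _ "of_int Y"]) simp
  moreover have "poly (map_poly of_int [:X^2 - d * Y^2, - 2 * X, 1:]) x = 0"
    using assms by (simp add: x_def map_poly_pCons algebra_simps power2_eq_square)
  hence "algebraic_int x"
    unfolding algebraic_int_altdef_ipoly by (intro exI[of _ "[:X^2 - d * Y^2, - 2 * X, 1:]"]) simp
  ultimately show ?thesis
    unfolding quad_ring_of_integers_def x_def by blast
qed

lemma pell_unit_in_quad_units:
  assumes "d \<ge> 0" and "pell_unit d v"
  shows "v \<in> quad_units d"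
proof -
  have "v \<in> quad_ring_of_integers d" if "pell_unit d v" for v
    using that quad_int_in_ring_of_integers[OF assms(1)] by (auto elim: pell_unitE)
  with assms show ?thesis
    unfolding quad_units_def by (simp add: pell_unit_inverse pell_unit_nonzero)
qed

lemma pell_unit_gt_1_coords_pos:
  fixes d X Y :: int
  assumes "d \<ge> 0" and "\<bar>X^2 - d * Y^2\<bar> = 1" and "of_int X + of_int Y * sqrt (of_int d) > (1 :: real)"
  shows "X > 0" and "Y > 0"
proof -
  define v where "v = of_int X + of_int Y * sqrt (real_of_int d)"
  define c where "c = of_int X + of_int (- Y) * sqrt (real_of_int d)"
  have "v * c = of_int (X^2 - d * Y^2)"
    unfolding v_def c_def by (rule quad_mult_conj[OF assms(1)])
  hence "\<bar>v * c\<bar> = 1"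
    using assms(2) by (metis of_int_1 of_int_abs)
  hence "\<bar>c\<bar> = 1 / v"
    using assms(3) unfolding v_def[symmetric] by (simp add: abs_mult field_simps)
  hence "\<bar>c\<bar> < 1"
    using assms(3) unfolding v_def[symmetric] by simp
  moreover have "2 * of_int X = v + c" and "2 * (of_int Y * sqrt (real_of_int d)) = v - c"
    unfolding v_def c_def by simp_all
  ultimately have "of_int X > (0 :: real)" and "of_int Y * sqrt (real_of_int d) > 0"
    using assms(3) unfolding v_def[symmetric] by linarith+
  thus "X > 0" and "Y > 0"
    using assms(1) by (simp_all add: zero_less_mult_iff)
qed

text \<open>For \<open>0 < Y < a\<close> the value \<open>X\<^sup>2\<close> would lie strictly between the consecutive squares
  \<open>(aY)\<^sup>2\<close> and \<open>(aY + 1)\<^sup>2\<close>.\<close>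
lemma pell_sq_plus_2_solution_ge:
  fixes a X Y :: int
  assumes "a \<ge> 1" and "X > 0" and "Y > 0" and N: "\<bar>X^2 - (a^2 + 2) * Y^2\<bar> = 1"
  shows "a \<le> Y" and "a^2 + 1 \<le> X"
proof -
  have lo: "a^2 * Y^2 + 2 * Y^2 - 1 \<le> X^2" and hi: "X^2 \<le> a^2 * Y^2 + 2 * Y^2 + 1"
    using N by (simp_all add: algebra_simps)
  show "a \<le> Y"
  proof (rule ccontr)
    assume "\<not> a \<le> Y"
    hence "Y * Y < a * Y"
      using assms(3) by simp
    have "1 \<le> Y^2"
      using assms(3) by simp
    hence "(a * Y)^2 < X^2"
      using lo by (simp add: power_mult_distrib)
    hence "a * Y < X"
      using assms(2) power_less_imp_less_base[of "a * Y" 2 X] by simp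
    have "X^2 < (a * Y + 1)^2"
      using hi \<open>Y * Y < a * Y\<close> by (simp add: power2_eq_square algebra_simps)
    hence "X < a * Y + 1"
      using assms(1,3) power_less_imp_less_base[of X 2 "a * Y + 1"] by simp
    with \<open>a * Y < X\<close> show False
      by simp
  qed
  hence "(a^2)^2 \<le> a^2 * Y^2"
    unfolding power2_eq_square[of "a^2"] using assms(1) by (intro mult_left_mono power_mono) simp_all
  moreover have "1 \<le> Y^2"
    using assms(3) by simp
  ultimately have "(a^2)^2 < X^2"
    using lo by linarith
  hence "a^2 < X"
    using assms(2) power_less_imp_less_base[of "a^2" 2 X] by simp
  thus "a^2 + 1 \<le> X"
    by simp
qed

lemma pell_unit_sq_plus_2_ge:
  fixes a :: int
  assumes "a \<ge> 1" and "pell_unit (a^2 + 2) v" and "v > 1"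
  shows "of_int (a^2 + 1) + of_int a * sqrt (of_int (a^2 + 2)) \<le> v"
proof -
  obtain X Y where v: "v = of_int X + of_int Y * sqrt (of_int (a^2 + 2))"
    and N: "\<bar>X^2 - (a^2 + 2) * Y^2\<bar> = 1"
    using assms(2) by (rule pell_unitE)
  have "X > 0" and "Y > 0"
    using pell_unit_gt_1_coords_pos[OF _ N] assms(3) unfolding v by simp_all
  from pell_sq_plus_2_solution_ge[OF assms(1) this N] have "a \<le> Y" and "a^2 + 1 \<le> X" .
  thus ?thesis
    unfolding v by (intro add_mono mult_right_mono) (simp_all only: of_int_le_iff, simp)
qed

text \<open>Division with remainder in the multiplicative group: \<open>\<bar>u\<bar> / \<epsilon>\<^sup>k\<close> with
  \<open>k = \<lfloor>log \<epsilon> \<bar>u\<bar>\<rfloor>\<close> is a unit in \<open>[1, \<epsilon>)\<close>, hence equal to \<open>1\<close> by minimality of \<open>\<epsilon>\<close>.\<close>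
lemma pell_unit_eq_powi_of_least:
  assumes "d \<ge> 0" and "pell_unit d \<epsilon>" and "\<epsilon> > 1"
    and least: "\<And>v. pell_unit d v \<Longrightarrow> v > 1 \<Longrightarrow> \<epsilon> \<le> v"
    and "pell_unit d u"
  shows "\<exists>n :: int. u = \<epsilon> powi n \<or> u = - (\<epsilon> powi n)"
proof -
  have "\<bar>u\<bar> > 0"
    using pell_unit_nonzero[OF assms(1,5)] by simp
  define k where "k = \<lfloor>log \<epsilon> \<bar>u\<bar>\<rfloor>"
  have powr_eq: "\<epsilon> powr of_int m = \<epsilon> powi m" for m
    using \<open>\<epsilon> > 1\<close> by (intro powr_real_of_int') simp_all
  have lo: "\<epsilon> powi k \<le> \<bar>u\<bar>" and "\<bar>u\<bar> < \<epsilon> powi (k + 1)"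
    using floor_log_eq_powr_iff[OF \<open>\<bar>u\<bar> > 0\<close> \<open>\<epsilon> > 1\<close>] k_def unfolding powr_eq by blast+
  hence hi: "\<bar>u\<bar> < \<epsilon> powi k * \<epsilon>"
    using \<open>\<epsilon> > 1\<close> by (simp add: power_int_add_1)
  have "\<epsilon> powi k > 0"
    using \<open>\<epsilon> > 1\<close> by simp
  define v where "v = \<bar>u\<bar> * inverse (\<epsilon> powi k)"
  have "pell_unit d v"
    unfolding v_def using assms
    by (intro pell_unit_mult pell_unit_abs pell_unit_inverse pell_unit_powi) simp_all
  moreover have "1 \<le> v" and "v < \<epsilon>"
    using lo hi \<open>\<epsilon> powi k > 0\<close> by (simp_all add: v_def field_simps)
  ultimately have "v = 1"
    using least by force
  hence "\<bar>u\<bar> = \<epsilon> powi k"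
    using \<open>\<epsilon> powi k > 0\<close> by (simp add: v_def field_simps)
  thus ?thesis
    by (metis abs_if minus_minus)
qed

theorem fundamental_unit_sq_plus_2:
  fixes a :: int
  assumes "a \<ge> 1" and "squarefree (a^2 + 2)"
  shows "fundamental_unit (a^2 + 2) (of_int (a^2 + 1) + of_int a * sqrt (of_int (a^2 + 2)))"
    (is "fundamental_unit ?d ?\<epsilon>")
proof -
  have "?d mod 4 = (a^2 mod 4 + 2) mod 4"
    by (simp add: mod_add_left_eq)
  hence d_mod_4: "?d mod 4 = 2 \<or> ?d mod 4 = 3"
    by (simp add: int_square_mod_4)
  have d_ge_2: "?d \<ge> 2"
    by simp
  have unit: "pell_unit ?d ?\<epsilon>"
    unfolding pell_unit_def
    by (intro exI[of _ "a^2 + 1"] exI[of _ a]) (simp add: algebra_simps power2_eq_square)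
  have "real_of_int (a^2 + 1) \<ge> 2" and "of_int a * sqrt (of_int ?d) \<ge> (0 :: real)"
    using assms(1) by simp_all
  hence gt_1: "?\<epsilon> > 1"
    by linarith
  have "v \<in> quad_units ?d \<longleftrightarrow> pell_unit ?d v" for v
    using quad_units_pell_unit[OF assms(2) d_mod_4 d_ge_2] pell_unit_in_quad_units[of ?d v] by auto
  with unit gt_1 show ?thesis
    unfolding fundamental_unit_def
    using pell_unit_eq_powi_of_least[of ?d ?\<epsilon>] pell_unit_sq_plus_2_ge[OF assms(1)] by simp
qed

section \<open>The roots of \<open>F\<^sub>s\<close>\<close>

lemma quadratic_roots_mult:
  fixes x y p q :: "'a :: field"
  assumes "x^2 + p * x + q = 0" and "y^2 + p * y + q = 0" and "x \<noteq> y"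
  shows "x * y = q"
proof -
  have "(x - y) * (x + y + p) = (x^2 + p * x + q) - (y^2 + p * y + q)"
    by (simp add: algebra_simps power2_eq_square)
  also have "\<dots> = 0"
    using assms(1,2) by simp
  finally have "(x - y) * (x + y + p) = 0" .
  with assms(3) have "x + y + p = 0"
    by simp
  hence "p = - (x + y)"
    by (simp only: add_eq_0_iff)
  with assms(1) show ?thesis
    by (simp add: algebra_simps power2_eq_square)
qed

lemma F_poly_factorization:
  fixes S z t :: real
  assumes "z^2 = S^2 + 2"
  shows "t^4 + (4*S^3 - 4*S^2 + 8*S - 4) * t^3 + (-6*S^2 - 6) * t^2 + 4*t + 1 =
    (t^2 + ((2*S^3 - 2*S^2 + 4*S - 2) + 2*(S^2 - S + 1) * z) * t - (S^2 + 1 + S*z)) *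
    (t^2 + ((2*S^3 - 2*S^2 + 4*S - 2) - 2*(S^2 - S + 1) * z) * t - (S^2 + 1 - S*z))"
proof -
  have "(t^2 + ((2*S^3 - 2*S^2 + 4*S - 2) + 2*(S^2 - S + 1) * z) * t - (S^2 + 1 + S*z)) *
        (t^2 + ((2*S^3 - 2*S^2 + 4*S - 2) - 2*(S^2 - S + 1) * z) * t - (S^2 + 1 - S*z)) =
      t^4 + (4*S^3 - 4*S^2 + 8*S - 4) * t^3 + (-6*S^2 - 6) * t^2 + 4*t + 1
      + (z^2 - (S^2 + 2)) * (- (4 * (S^2 - S + 1)^2) * t^2 + 4 * (S^2 - S + 1) * S * t - S^2)"
    by algebra
  with assms show ?thesis
    by simp
qed

lemma mult_sqrt_sq_plus_2_bounds:
  fixes S z :: real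
  assumes "S \<noteq> 0" and "z^2 = S^2 + 2" and "S * z > 0"
  shows "S^2 < S * z" and "S * z < S^2 + 1"
proof -
  have q2: "(S * z)^2 = (S^2)^2 + 2 * S^2"
    using assms(2) by (simp add: algebra_simps power2_eq_square)
  hence "(S^2)^2 < (S * z)^2"
    using assms(1) by simp
  thus "S^2 < S * z"
    using assms(3) power_less_imp_less_base[of "S^2" 2 "S * z"] by simp
  have "(S * z)^2 < (S^2 + 1)^2"
    using q2 by (simp add: power2_eq_square algebra_simps)
  thus "S * z < S^2 + 1"
    using power_less_imp_less_base[of "S * z" 2 "S^2 + 1"] by simp
qed

lemma ge_3_power_bounds:
  fixes a :: real
  assumes "a \<ge> 3"
  shows "3 * a \<le> a^2" and "3 * a^2 \<le> a^3" and "3 * a^3 \<le> a^4"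
proof -
  have "3 * a^n \<le> a^Suc n" for n
    using assms by (simp add: mult_right_mono)
  from this[of 1] this[of 2] this[of 3] show "3 * a \<le> a^2" "3 * a^2 \<le> a^3" "3 * a^3 \<le> a^4"
    by (simp_all add: numeral_eq_Suc)
qed

text \<open>Both bounds come from \<open>(A S) (B S) = -4 S\<^sup>2 (S\<^sup>2 + 1)\<close>, where \<open>A\<close> is the conjugate
  coefficient and \<open>A S \<approx> 4 S\<^sup>4\<close>.\<close>
lemma second_factor_coeff_bounds:
  fixes S z :: real
  assumes S3: "\<bar>S\<bar> \<ge> 3" and z2: "z^2 = S^2 + 2" and "S * z > 0"
  defines "B \<equiv> (2*S^3 - 2*S^2 + 4*S - 2) - 2*(S^2 - S + 1) * z"
  shows "\<bar>B\<bar> \<le> 1" and "B * S \<le> -3/5"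
proof -
  define a where "a = \<bar>S\<bar>"
  define u where "u = 2*S^3 - 2*S^2 + 4*S - 2"
  define v where "v = 2*(S^2 - S + 1)"
  define P where "P = (u + v * z) * S"
  have a3: "a \<ge> 3"
    using S3 by (simp add: a_def)
  note h = ge_3_power_bounds[OF a3]
  have Sa: "S^2 = a^2" "S^4 = a^4" "S \<le> a" "- S \<le> a" "S^3 \<le> a^3" "- (S^3) \<le> a^3"
    using abs_ge_self[of "S^3"] abs_ge_minus_self[of "S^3"]
    by (simp_all add: a_def power_even_abs power_abs)
  have q: "S^2 < S * z" "S * z < S^2 + 1"
    using mult_sqrt_sq_plus_2_bounds[OF _ z2 assms(3)] S3 by auto
  have "v > 0"
    unfolding v_def using Sa h a3 by argo
  have "P - (4*S^4 - 4*S^3 + 6*S^2 - 2*S) = v * (S * z - S^2)"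
    unfolding P_def u_def v_def by algebra
  moreover have "(4*S^4 - 4*S^3 + 8*S^2 - 4*S + 2) - P = v * (S^2 + 1 - S * z)"
    unfolding P_def u_def v_def by algebra
  moreover have "0 \<le> v * (S * z - S^2)" and "0 \<le> v * (S^2 + 1 - S * z)"
    using q \<open>v > 0\<close> by simp_all
  ultimately have "4*S^4 - 4*S^3 + 6*S^2 - 2*S \<le> P" and "P \<le> 4*S^4 - 4*S^3 + 8*S^2 - 4*S + 2"
    by linarith+
  hence P_lo: "4*a^3 + 4*a \<le> P" and P_hi: "P \<le> 20/3 * a^4 + 20/3 * a^2"
    using Sa h a3 by linarith+
  have "(B * S) * P = (u^2 - v^2 * z^2) * S^2"
    by (simp add: B_def P_def u_def v_def power2_eq_square algebra_simps)
  also have "\<dots> = - (4*a^4 + 4*a^2)"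
    unfolding z2 u_def v_def Sa(1)[symmetric] Sa(2)[symmetric] by algebra
  finally have BSP: "(B * S) * P = - (4*a^4 + 4*a^2)" .
  have "P > 0"
    using P_lo a3 h by argo
  have "\<bar>B * S\<bar> * P = \<bar>(B * S) * P\<bar>"
    using \<open>P > 0\<close> by (simp add: abs_mult)
  also have "\<dots> = 4*a^4 + 4*a^2"
    unfolding BSP abs_minus_cancel by (rule abs_of_nonneg) simp
  also have "\<dots> = a * (4*a^3 + 4*a)"
    by (simp add: algebra_simps power2_eq_square power3_eq_cube power4_eq_xxxx)
  also have "\<dots> \<le> a * P"
    using P_lo a3 by (intro mult_left_mono) simp_all
  finally have "\<bar>B\<bar> * a \<le> 1 * a"
    using \<open>P > 0\<close> by (simp add: abs_mult a_def mult.commute)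
  thus "\<bar>B\<bar> \<le> 1"
    using a3 by simp
  show "B * S \<le> -3/5"
  proof (rule ccontr)
    assume "\<not> B * S \<le> -3/5"
    hence "(B * S) * P > (-3/5) * P"
      using \<open>P > 0\<close> by (intro mult_strict_right_mono) auto
    with BSP P_hi show False
      by argo
  qed
qed

lemma abs_inverse_le_third:
  fixes S :: real
  assumes "\<bar>S\<bar> \<ge> 3"
  shows "\<bar>inverse S\<bar> \<le> 1/3" and "(inverse S)^2 \<le> 1/9"
proof -
  have "1 / \<bar>S\<bar> \<le> 1 / 3"
    using assms by (intro divide_left_mono) simp_all
  thus i: "\<bar>inverse S\<bar> \<le> 1/3"
    by (simp add: inverse_eq_divide)
  have "(inverse S)^2 = \<bar>inverse S\<bar>^2"
    by (rule power2_abs[symmetric])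
  also have "\<dots> \<le> (1/3)^2"
    using i by (intro power_mono) simp_all
  finally show "(inverse S)^2 \<le> 1/9"
    by (simp add: power_divide)
qed

lemma large_root_bound:
  fixes S \<theta> r :: real
  assumes "\<bar>S\<bar> \<ge> 3" and "1 \<le> \<theta>" and "\<theta> \<le> 2"
    and r: "r = -4*S^3 + 4*S^2 - 8*S + 4 - 3/2 * inverse S - 3/2 * inverse S ^ 2 + \<theta> * inverse S ^ 4"
  shows "\<bar>r\<bar> \<ge> 2"
proof -
  define i where "i = inverse S"
  define M where "M = (S - 1) * (S^2 + 2)"
  note i = abs_inverse_le_third[OF assms(1), folded i_def]
  have "(i^2)^2 \<le> (1/9)^2"
    using i(2) by (intro power_mono) simp_all
  hence "i^4 \<le> 1/81"
    by (simp add: power_divide flip: power_mult)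
  hence "\<theta> * i^4 \<le> 2 * (1/81)"
    using assms(2,3) by (intro mult_mono) simp_all
  moreover have "0 \<le> \<theta> * i^4" "- 1/3 \<le> i" "i \<le> 1/3" "0 \<le> i^2"
    using assms(2) i(1) by (simp_all add: abs_le_iff)
  ultimately have small: "\<theta> * i^4 \<le> 2/81" "0 \<le> \<theta> * i^4" "- 1/3 \<le> i" "i \<le> 1/3" "0 \<le> i^2"
    by simp_all
  have r_eq: "r = - 4 * M - 4 - 3/2 * i - 3/2 * i^2 + \<theta> * i^4"
    unfolding r i_def M_def by (simp add: algebra_simps power2_eq_square power3_eq_cube)
  have "S^2 + 2 \<ge> 11"
    using assms(1) power_mono[of 3 "\<bar>S\<bar>" 2] by simp
  have "S \<ge> 3 \<or> S \<le> -3"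
    using assms(1) by arith
  thus ?thesis
  proof (elim disjE)
    assume "S \<ge> 3"
    hence "2 * 11 \<le> M"
      unfolding M_def using \<open>S^2 + 2 \<ge> 11\<close> by (intro mult_mono) simp_all
    hence "r \<le> -2"
      using r_eq small by linarith
    thus ?thesis
      by simp
  next
    assume "S \<le> -3"
    hence "4 * 11 \<le> (1 - S) * (S^2 + 2)"
      using \<open>S^2 + 2 \<ge> 11\<close> by (intro mult_mono) simp_all
    hence "r \<ge> 2"
      using r_eq small i(2) unfolding M_def by (simp add: algebra_simps)
    thus ?thesis
      by simp
  qed
qed

lemma small_root_bound:
  fixes S \<theta> r :: real
  assumes "\<bar>S\<bar> \<ge> 3" and "0 \<le> \<theta>" and "\<theta> \<le> 1"
    and r: "r = 1/2 * inverse S + 1/2 * inverse S ^ 2 - \<theta> * inverse S ^ 4"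
  shows "0 \<le> S * r" and "S * r \<le> 1"
proof -
  define i where "i = inverse S"
  note i = abs_inverse_le_third[OF assms(1), folded i_def]
  have "\<bar>i\<bar>^3 \<le> (1/3)^3"
    using i(1) by (intro power_mono) simp_all
  hence "\<bar>i\<bar>^3 \<le> 1/27"
    by (simp add: power_divide)
  hence "\<bar>\<theta> * i^3\<bar> \<le> 1 * (1/27)"
    unfolding abs_mult power_abs using assms(2,3) by (intro mult_mono) simp_all
  moreover have "S * r = 1/2 + 1/2 * i - \<theta> * i^3"
    using assms(1) unfolding r i_def by (simp add: field_simps power2_eq_square power3_eq_cube
        power4_eq_xxxx)
  ultimately show "0 \<le> S * r" and "S * r \<le> 1"
    using i(1) by (simp_all add: abs_le_iff)
qed

lemma conj_unit_bounds:
  fixes S z :: real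
  assumes "\<bar>S\<bar> \<ge> 3" and z2: "z^2 = S^2 + 2" and "S * z > 0"
  shows "0 < S^2 + 1 - S * z" and "S^2 + 1 - S * z < 1" and "9/20 \<le> (S^2 + 1 - S * z) * S^2"
proof -
  have q: "S^2 < S * z" "S * z < S^2 + 1"
    using mult_sqrt_sq_plus_2_bounds[OF _ z2 assms(3)] assms(1) by auto
  have "S^2 \<ge> 9"
    using assms(1) power_mono[of 3 "\<bar>S\<bar>" 2] by simp
  have unit: "(S^2 + 1 + S * z) * (S^2 + 1 - S * z) = 1"
    using z2 by (simp add: algebra_simps power2_eq_square)
  show "0 < S^2 + 1 - S * z"
    using q by simp
  have "1 * (S^2 + 1 - S * z) < (S^2 + 1 + S * z) * (S^2 + 1 - S * z)"
    using q \<open>S^2 \<ge> 9\<close> by (intro mult_strict_right_mono) simp_all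
  thus "S^2 + 1 - S * z < 1"
    using unit by simp
  have "1 = (S^2 + 1 + S * z) * (S^2 + 1 - S * z)"
    using unit by simp
  also have "\<dots> \<le> (2 * S^2 + 2) * (S^2 + 1 - S * z)"
    using q by (intro mult_right_mono) simp_all
  also have "\<dots> \<le> (20/9 * S^2) * (S^2 + 1 - S * z)"
    using \<open>S^2 \<ge> 9\<close> \<open>0 < S^2 + 1 - S * z\<close> by (intro mult_right_mono) simp_all
  finally show "9/20 \<le> (S^2 + 1 - S * z) * S^2"
    by (simp add: mult_ac)
qed

lemma quadratic_nonzero_large:
  fixes B e t :: real
  assumes "\<bar>B\<bar> \<le> 1" and "e < 1" and "\<bar>t\<bar> \<ge> 2"
  shows "t^2 + B * t - e \<noteq> 0"
proof -
  have "\<bar>B * t\<bar> \<le> \<bar>t\<bar>"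
    using assms(1) by (simp add: abs_mult mult_left_le_one_le)
  moreover have "2 * \<bar>t\<bar> \<le> \<bar>t\<bar> * \<bar>t\<bar>"
    using assms(3) by (intro mult_right_mono) simp_all
  hence "2 * \<bar>t\<bar> \<le> t^2"
    by (simp add: power2_eq_square)
  moreover have "- \<bar>B * t\<bar> \<le> B * t"
    by simp
  ultimately show ?thesis
    using assms(2,3) by linarith
qed

lemma quadratic_nonzero_small:
  fixes B e S t :: real
  assumes "B * S \<le> -3/5" and "9/20 \<le> e * S^2" and "0 \<le> S * t" and "S * t \<le> 1"
  shows "t^2 + B * t - e \<noteq> 0"
proof -
  define x where "x = S * t"
  have "S^2 * (t^2 + B * t - e) = x^2 + (B * S) * x - e * S^2"
    by (simp add: x_def power2_eq_square algebra_simps)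
  moreover have "x^2 \<le> x"
    using assms(3,4) by (simp add: x_def power2_eq_square mult_left_le_one_le)
  moreover have "(B * S) * x \<le> (-3/5) * x"
    using assms(1,3) by (intro mult_right_mono) (simp_all add: x_def)
  ultimately have "S^2 * (t^2 + B * t - e) < 0"
    using assms(2,4) unfolding x_def by linarith
  thus ?thesis
    by auto
qed

lemma F_roots_product:
  fixes S z r1 r3 \<theta>1 \<theta>3 :: real
  assumes S3: "\<bar>S\<bar> \<ge> 3" and z2: "z^2 = S^2 + 2" and Sz: "S * z > 0"
    and F1: "r1^4 + (4*S^3 - 4*S^2 + 8*S - 4) * r1^3 + (-6*S^2 - 6) * r1^2 + 4*r1 + 1 = 0"
    and F3: "r3^4 + (4*S^3 - 4*S^2 + 8*S - 4) * r3^3 + (-6*S^2 - 6) * r3^2 + 4*r3 + 1 = 0"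
    and "1 \<le> \<theta>1" "\<theta>1 \<le> 2"
    and r1: "r1 = -4*S^3 + 4*S^2 - 8*S + 4 - 3/2 * inverse S - 3/2 * inverse S ^ 2 + \<theta>1 * inverse S ^ 4"
    and "0 \<le> \<theta>3" "\<theta>3 \<le> 1"
    and r3: "r3 = 1/2 * inverse S + 1/2 * inverse S ^ 2 - \<theta>3 * inverse S ^ 4"
  shows "S^2 + 1 + S * z = - (r1 * r3)"
proof -
  define A where "A = (2*S^3 - 2*S^2 + 4*S - 2) + 2*(S^2 - S + 1) * z"
  define B where "B = (2*S^3 - 2*S^2 + 4*S - 2) - 2*(S^2 - S + 1) * z"
  define e' where "e' = S^2 + 1 - S * z"
  have factor: "(t^2 + A * t - (S^2 + 1 + S * z)) * (t^2 + B * t - e') = 0"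
    if "t^4 + (4*S^3 - 4*S^2 + 8*S - 4) * t^3 + (-6*S^2 - 6) * t^2 + 4*t + 1 = 0" for t
    using that F_poly_factorization[OF z2, of t] unfolding A_def B_def e'_def by simp
  have "\<bar>r1\<bar> \<ge> 2"
    using large_root_bound[OF S3 assms(6-8)] .
  have "0 \<le> S * r3" "S * r3 \<le> 1"
    using small_root_bound[OF S3 assms(9-11)] by simp_all
  hence "\<bar>S\<bar> * \<bar>r3\<bar> \<le> 1"
    by (simp add: abs_mult[symmetric])
  moreover have "3 * \<bar>r3\<bar> \<le> \<bar>S\<bar> * \<bar>r3\<bar>"
    using S3 by (intro mult_right_mono) simp_all
  ultimately have "3 * \<bar>r3\<bar> \<le> 1"
    by linarith
  hence "r1 \<noteq> r3"
    using \<open>\<bar>r1\<bar> \<ge> 2\<close> by auto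
  have "r1^2 + B * r1 - e' \<noteq> 0"
    using quadratic_nonzero_large second_factor_coeff_bounds(1)[OF S3 z2 Sz]
      conj_unit_bounds(2)[OF S3 z2 Sz] \<open>\<bar>r1\<bar> \<ge> 2\<close> unfolding B_def e'_def by blast
  hence "r1^2 + A * r1 + (- (S^2 + 1 + S * z)) = 0"
    using factor[OF F1] by simp
  moreover have "r3^2 + B * r3 - e' \<noteq> 0"
    using quadratic_nonzero_small second_factor_coeff_bounds(2)[OF S3 z2 Sz]
      conj_unit_bounds(3)[OF S3 z2 Sz] \<open>0 \<le> S * r3\<close> \<open>S * r3 \<le> 1\<close>
    unfolding B_def e'_def by blast
  hence "r3^2 + A * r3 + (- (S^2 + 1 + S * z)) = 0"
    using factor[OF F3] by simp
  ultimately have "r1 * r3 = - (S^2 + 1 + S * z)"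
    using \<open>r1 \<noteq> r3\<close> by (rule quadratic_roots_mult)
  thus ?thesis
    by simp
qed

lemma F_poly_roots_product:
  fixes s :: int and r1 r3 \<theta>1 \<theta>3 :: real
  assumes "\<bar>s\<bar> \<ge> 3" and F: "F_poly s r1 = 0" "F_poly s r3 = 0"
    and \<theta>1: "1 \<le> \<theta>1" "\<theta>1 \<le> 2"
    and r1: "r1 = -4*s^3 + 4*s^2 - 8*s + 4 - 3/2 * inverse (real_of_int s)
                  - 3/2 * inverse (real_of_int s)^2 + \<theta>1 * inverse (real_of_int s)^4"
    and \<theta>3: "0 \<le> \<theta>3" "\<theta>3 \<le> 1"
    and r3: "r3 = 1/2 * inverse (real_of_int s) + 1/2 * inverse (real_of_int s)^2
                  - \<theta>3 * inverse (real_of_int s)^4"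
  shows "real_of_int (s^2 + 1) + real_of_int \<bar>s\<bar> * sqrt (real_of_int (s^2 + 2)) = - (r1 * r3)"
proof -
  define S where "S = real_of_int s"
  define z where "z = sgn S * sqrt (S^2 + 2)"
  have S3: "\<bar>S\<bar> \<ge> 3"
    using assms(1) unfolding S_def by linarith
  hence "S \<noteq> 0"
    by auto
  have "r1 = -4*S^3 + 4*S^2 - 8*S + 4 - 3/2 * inverse S - 3/2 * inverse S ^ 2 + \<theta>1 * inverse S ^ 4"
    using r1 by (simp add: S_def)
  moreover have "z^2 = S^2 + 2"
    using \<open>S \<noteq> 0\<close> by (simp add: z_def power_mult_distrib sgn_if)
  moreover have Sz: "S * z = \<bar>S\<bar> * sqrt (S^2 + 2)"
    by (simp add: z_def mult.assoc[symmetric] sgn_mult_abs abs_sgn)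
  moreover have "S * z > 0"
    using \<open>S \<noteq> 0\<close> unfolding Sz by (simp add: add_pos_nonneg)
  ultimately have "S^2 + 1 + S * z = - (r1 * r3)"
    using F_roots_product[OF S3] F[unfolded F_poly_def, folded S_def] \<theta>1 \<theta>3 r3[folded S_def]
    by blast
  thus ?thesis
    unfolding Sz by (simp add: S_def)
qed

theorem mainTheorem7:
  fixes s :: int
  assumes "s \<noteq> 0" and "squarefree (s^2 + 2)"
  defines "eps \<equiv> real_of_int (s^2 + 1) + real_of_int \<bar>s\<bar> * sqrt (real_of_int (s^2 + 2))"
  shows "fundamental_unit (s^2 + 2) eps \<and>
    ((\<bar>s\<bar> \<ge> 3 \<and> (\<exists>k::int. 3*s^2 - 4*s + 4 = k^2)) \<longrightarrow>
      (\<forall>r1 r3 :: real. F_poly s r1 = 0 \<and> F_poly s r3 = 0 \<and>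
         (\<exists>\<theta>1. 1 \<le> \<theta>1 \<and> \<theta>1 \<le> 2 \<and>
            r1 = -4*s^3 + 4*s^2 - 8*s + 4 - 3/2 * inverse (real_of_int s) - 3/2 * inverse (real_of_int s)^2
                 + \<theta>1 * inverse (real_of_int s)^4) \<and>
         (\<exists>\<theta>3. 0 \<le> \<theta>3 \<and> \<theta>3 \<le> 1 \<and>
            r3 = 1/2 * inverse (real_of_int s) + 1/2 * inverse (real_of_int s)^2
                 - \<theta>3 * inverse (real_of_int s)^4)
       \<longrightarrow> eps = - (r1 * r3)))"
proof (intro conjI impI allI)
  show "fundamental_unit (s^2 + 2) eps"
    using fundamental_unit_sq_plus_2[of "\<bar>s\<bar>"] assms by (simp add: eps_def)
qed (use F_poly_roots_product in \<open>auto simp: eps_def\<close>)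

end
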